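(* Let $B\in\mathscr B$, let $r_B$ be as defined below, and let $H\colon\mathbb T^2\to\mathbb R$ be a Lipschitz function with $\nabla^\perp H=r_Bb$ $\mathscr L^2$-a.e. in $B$, where $\nabla^\perp=(-\partial_2,\partial_1)$. Let $t_1,t_2\in[0,T]$ and $\mathsf T:=\{\gamma\in\Gamma:\ \gamma((t_1,t_2))\subset B\}$. Then for $\eta$-a.e. $\gamma\in\mathsf T$ the function $(t_1,t_2)\ni t\mapsto H(\gamma(t))$ is constant.
   Context: $T>0$, $\mathbb T^2=\mathbb R^2/\mathbb Z^2$, $b\colon\mathbb T^2\to\mathbb R^2$ is a bounded, everywhere defined Borel vector field with $b\in\mathrm{BV}(\mathbb T^2)$, nearly incompressible with density $\rho$ (i.e. $\ln\rho\in L^\infty((0,T)\times\mathbb T^2)$ and $\partial_t\rho+\mathrm{div}(\rho b)=0$ in $\mathscr D'$). $\Gamma:=C([0,T];\mathbb T^2)$, $e_t(\gamma)=\gamma(t)$. $\eta$ is a positive finite Borel measure on $\Gamma$, concentrated on curves with $\gamma(t)=\gamma(0)+\int_0^tb(\gamma(\tau))d\tau$, such that $(e_t)_\#\eta=\rho(t,\cdot)\mathscr L^2$ for all $t$. $\mathscr B:=\{B(x,r):x\in\mathbb Q^2,r\in\mathbb Q^+\}$. $\Gamma_B:=\{\gamma:\mathscr L^1(\{t:\gamma(t)\in B\})>0\}$; $\mathsf T_B:=\{\gamma\in\Gamma_B$ integral curve of $b$ with $\gamma(0)\notin B,\gamma(T)\notin B\}$; $\rho_B(t,\cdot)\mathscr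 L^2:=(e_t)_\#(\eta\llcorner\mathsf T_B)$; $r_B(x):=\int_0^T\rho_B(t,x)dt$. (One has $\mathrm{div}(r_Bb)=0$ in $\mathscr D'(B)$, so such a Lipschitz $H$ exists.) *)

theory Defs
  imports "HOL-Analysis.Analysis"
begin

text \<open>The flat torus T^2 = R^2/Z^2 is realised as the subset S^1 x S^1 of complex x complex,
  via the covering map tor.  Functions on T^2 are functions on complex x complex
  (only their values on the torus matter).\<close>

definition tor :: "real \<times> real \<Rightarrow> complex \<times> complex" where
  "tor x = (cis (2 * pi * fst x), cis (2 * pi * snd x))"

definition torus :: "(complex \<times> complex) set" where
  "torus = range tor"

definition tadd :: "complex \<times> complex \<Rightarrow> real \<times> real \<Rightarrow> complex \<times> complex" where
  "tadd z v = (fst z * cis (2 * pi * fst v), snd z * cis (2 * pi * snd v))"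

definition tleb :: "(complex \<times> complex) measure" where
  "tleb = distr (restrict_space lborel ({0..<1} \<times> {0..<1})) borel tor"

definition ratballs :: "(complex \<times> complex) set set" where
  "ratballs = {tor ` ball x r | x r. fst x \<in> \<rat> \<and> snd x \<in> \<rat> \<and> r \<in> \<rat> \<and> r > 0}"

text \<open>Path space Gamma = C([0,T]; T^2): curves are extensional functions on [0,T];
  its Borel sigma-algebra is the one generated by the evaluation maps.\<close>
definition Gamma :: "real \<Rightarrow> (real \<Rightarrow> complex \<times> complex) set" where
  "Gamma T = {\<gamma> \<in> extensional {0..T}. continuous_on {0..T} \<gamma> \<and> \<gamma> ` {0..T} \<subseteq> torus}"

definition Gamma_M :: "real \<Rightarrow> (real \<Rightarrow> complex \<times> complex) measure" where
  "Gamma_M T = restrict_space (Pi\<^sub>M {0..T} (\<lambda>_. borel)) (Gamma T)"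

definition integral_curve :: "(complex \<times> complex \<Rightarrow> real \<times> real) \<Rightarrow> real \<Rightarrow> (real \<Rightarrow> complex \<times> complex) \<Rightarrow> bool" where
  "integral_curve b T \<gamma> \<longleftrightarrow> \<gamma> \<in> Gamma T \<and>
     (\<forall>t\<in>{0..T}. \<gamma> t = tadd (\<gamma> 0) (LINT \<tau>:{0..t}|lborel. b (\<gamma> \<tau>)))"

definition Gamma_B :: "real \<Rightarrow> (complex \<times> complex) set \<Rightarrow> (real \<Rightarrow> complex \<times> complex) set" where
  "Gamma_B T B = {\<gamma> \<in> Gamma T. emeasure lborel {t \<in> {0..T}. \<gamma> t \<in> B} > 0}"

definition TB :: "(complex \<times> complex \<Rightarrow> real \<times> real) \<Rightarrow> real \<Rightarrow> (complex \<times> complex) set \<Rightarrow> (real \<Rightarrow> complex \<times> complex) set" where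
  "TB b T B = {\<gamma> \<in> Gamma_B T B. integral_curve b T \<gamma> \<and> \<gamma> 0 \<notin> B \<and> \<gamma> T \<notin> B}"

definition pd :: "('a::real_normed_vector \<Rightarrow> real) \<Rightarrow> 'a \<Rightarrow> 'a \<Rightarrow> real" where
  "pd f v z = frechet_derivative f (at z) v"

fun iter_pd :: "'a::real_normed_vector list \<Rightarrow> ('a \<Rightarrow> real) \<Rightarrow> 'a \<Rightarrow> real" where
  "iter_pd [] f = f"
| "iter_pd (v # vs) f = (\<lambda>z. pd (iter_pd vs f) v z)"

definition smooth :: "('a::euclidean_space \<Rightarrow> real) \<Rightarrow> bool" where
  "smooth f \<longleftrightarrow> (\<forall>vs. set vs \<subseteq> Basis \<longrightarrow> (\<forall>z. iter_pd vs f differentiable (at z)))"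

definition periodic2 :: "(real \<times> real \<Rightarrow> real) \<Rightarrow> bool" where
  "periodic2 f \<longleftrightarrow> (\<forall>x k1 k2. k1 \<in> \<int> \<and> k2 \<in> \<int> \<longrightarrow> f (x + (k1, k2)) = f x)"

text \<open>Test functions in C_c^infinity((0,T) x T^2), as functions on R x R^2 periodic in space.\<close>
definition test_fun :: "real \<Rightarrow> (real \<times> (real \<times> real) \<Rightarrow> real) \<Rightarrow> bool" where
  "test_fun T \<phi> \<longleftrightarrow> smooth \<phi> \<and> (\<forall>t. periodic2 (\<lambda>x. \<phi> (t, x))) \<and>
     (\<exists>a c. 0 < a \<and> a < c \<and> c < T \<and> (\<forall>t x. t \<notin> {a..c} \<longrightarrow> \<phi> (t, x) = 0))"

definition nearly_incompressible ::
  "real \<Rightarrow> (complex \<times> complex \<Rightarrow> real \<times> real) \<Rightarrow> (real \<Rightarrow> complex \<times> complex \<Rightarrow> real) \<Rightarrow> bool" where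
  "nearly_incompressible T b \<rho> \<longleftrightarrow>
     (\<lambda>(t, x). \<rho> t x) \<in> borel_measurable borel \<and>
     (\<exists>C. AE z in lborel. z \<in> {0<..<T} \<times> ({0..<1} \<times> {0..<1}) \<longrightarrow>
            \<rho> (fst z) (tor (snd z)) > 0 \<and> \<bar>ln (\<rho> (fst z) (tor (snd z)))\<bar> \<le> C) \<and>
     (\<forall>\<phi>. test_fun T \<phi> \<longrightarrow>
        (LINT z:{0<..<T} \<times> ({0..<1} \<times> {0..<1})|lborel.
           \<rho> (fst z) (tor (snd z)) *
           (pd \<phi> (1, 0, 0) z + fst (b (tor (snd z))) * pd \<phi> (0, 1, 0) z
                             + snd (b (tor (snd z))) * pd \<phi> (0, 0, 1) z)) = 0)"

text \<open>b in BV(T^2): b in L^1 and each component has distributional derivative a finite measure.\<close>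
definition BV_torus :: "(complex \<times> complex \<Rightarrow> real \<times> real) \<Rightarrow> bool" where
  "BV_torus b \<longleftrightarrow> set_integrable lborel ({0..<1} \<times> {0..<1}) (\<lambda>x. b (tor x)) \<and>
     (\<forall>f \<in> {fst, snd}. \<exists>C. \<forall>\<psi>1 \<psi>2. smooth \<psi>1 \<and> smooth \<psi>2 \<and> periodic2 \<psi>1 \<and> periodic2 \<psi>2 \<and>
          (\<forall>x. (\<psi>1 x)\<^sup>2 + (\<psi>2 x)\<^sup>2 \<le> 1) \<longrightarrow>
          \<bar>LINT x:{0..<1} \<times> {0..<1}|lborel. f (b (tor x)) * (pd \<psi>1 (1, 0) x + pd \<psi>2 (0, 1) x)\<bar> \<le> C)"

end

theory Submission
  imports Defs
begin

text \<open>Where \<open>H\<close> is differentiable, \<open>\<nabla>\<^sup>\<bottom>H = r\<^sub>B b\<close> makes \<open>\<nabla>H\<close> orthogonal to \<open>b\<close>, so along an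
  integral curve the chain rule gives \<open>(H \<circ> \<gamma>)' = \<nabla>H \<cdot> b = 0\<close>. This needs two facts about
  almost every curve: it spends only a null set of times in the null set where the gradient
  identity fails (Fubini, since the time marginals of \<open>\<eta>\<close> are absolutely continuous), and its
  lift to \<open>\<real>\<^sup>2\<close> is differentiable with velocity \<open>b(\<gamma>(t))\<close> at every Lebesgue point of the bounded
  function \<open>b \<circ> \<gamma>\<close>. Then \<open>H \<circ> \<gamma>\<close> is Lipschitz with vanishing derivative almost everywhere;
  its image is therefore null, and a connected null subset of \<open>\<real>\<close> is a point.\<close>

section \<open>Lebesgue points of bounded functions\<close>

definition low_density_points :: "'a::euclidean_space set \<Rightarrow> real \<Rightarrow> 'a set" where
  "low_density_points E e =
     {x\<in>E. \<forall>r>0. \<exists>d. 0 < d \<and> d < r \<and>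
        e * measure lebesgue (cball x d) \<le> measure lebesgue (cball x d - E)}"

lemma emeasure_disjoint_Union_le_Diff:
  assumes C: "countable C" and disj: "disjoint_family_on X C"
    and E: "E \<in> sets lebesgue" and U: "U \<in> sets lebesgue"
    and X: "\<And>i. i \<in> C \<Longrightarrow> X i \<in> lmeasurable" "\<And>i. i \<in> C \<Longrightarrow> X i \<subseteq> U"
    and sparse: "\<And>i. i \<in> C \<Longrightarrow> e * measure lebesgue (X i) \<le> measure lebesgue (X i - E)"
    and e: "0 \<le> e"
  shows "ennreal e * emeasure lebesgue (\<Union>i\<in>C. X i) \<le> emeasure lebesgue (U - E)"
proof -
  have XE: "X i - E \<in> lmeasurable" if "i \<in> C" for i
    using X(1)[OF that] E by (rule fmeasurable_Diff)
  have disjE: "disjoint_family_on (\<lambda>i. X i - E) C"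
    using disj unfolding disjoint_family_on_def by blast
  have "ennreal e * emeasure lebesgue (\<Union>i\<in>C. X i)
      = (\<integral>\<^sup>+i. ennreal e * emeasure lebesgue (X i) \<partial>count_space C)"
    using C disj X(1) by (simp add: emeasure_UN_countable fmeasurableD nn_integral_cmult)
  also have "\<dots> \<le> (\<integral>\<^sup>+i. emeasure lebesgue (X i - E) \<partial>count_space C)"
  proof (rule nn_integral_mono)
    fix i assume "i \<in> space (count_space C)"
    then have i: "i \<in> C" by simp
    have "ennreal e * emeasure lebesgue (X i) = ennreal (e * measure lebesgue (X i))"
      using X(1)[OF i] e by (simp add: emeasure_eq_measure2 ennreal_mult)
    also have "\<dots> \<le> ennreal (measure lebesgue (X i - E))"
      using sparse[OF i] by (rule ennreal_leI)
    also have "\<dots> = emeasure lebesgue (X i - E)"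
      using XE[OF i] by (simp add: emeasure_eq_measure2)
    finally show "ennreal e * emeasure lebesgue (X i) \<le> emeasure lebesgue (X i - E)" .
  qed
  also have "\<dots> = emeasure lebesgue (\<Union>i\<in>C. X i - E)"
    using C disjE XE by (subst emeasure_UN_countable) (auto simp: fmeasurableD)
  also have "\<dots> \<le> emeasure lebesgue (U - E)"
    using X(2) U E by (intro emeasure_mono) auto
  finally show ?thesis .
qed

lemma negligible_low_density_points:
  fixes E :: "'a::euclidean_space set"
  assumes E: "E \<in> sets lebesgue" and e: "e > 0"
  shows "negligible (low_density_points E e)"
  unfolding negligible_outer
proof (intro allI impI)
  let ?S = "low_density_points E e"
  fix \<epsilon> :: real assume "\<epsilon> > 0"
  obtain U where U: "open U" "E \<subseteq> U" "emeasure lebesgue (U - E) < ennreal (e * \<epsilon>)"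
    using sets_lebesgue_outer_open[OF E, of "e * \<epsilon>"] \<open>\<epsilon> > 0\<close> e by (metis mult_pos_pos)
  define K where "K = {(x, d). x \<in> ?S \<and> 0 < d \<and> cball x d \<subseteq> U \<and>
                      e * measure lebesgue (cball x d) \<le> measure lebesgue (cball x d - E)}"
  have Kcov: "\<exists>i. i \<in> K \<and> x \<in> cball (fst i) (snd i) \<and> snd i < d" if x: "x \<in> ?S" and "0 < d" for x d
  proof -
    obtain \<rho> where "\<rho> > 0" "cball x \<rho> \<subseteq> U"
      using x U(1,2) open_contains_cball unfolding low_density_points_def by blast
    moreover have "\<forall>r>0. \<exists>d. 0 < d \<and> d < r \<and>
        e * measure lebesgue (cball x d) \<le> measure lebesgue (cball x d - E)"
      using x by (simp add: low_density_points_def)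
    then obtain d' where "0 < d'" "d' < min d \<rho>"
        "e * measure lebesgue (cball x d') \<le> measure lebesgue (cball x d' - E)"
      using \<open>0 < d\<close> \<open>\<rho> > 0\<close> by (meson min_less_iff_conj)
    ultimately have "(x, d') \<in> K"
      using x subset_cball[of d' \<rho> x] unfolding K_def by auto
    then show ?thesis
      using \<open>0 < d'\<close> \<open>d' < min d \<rho>\<close> by (intro exI[of _ "(x, d')"]) auto
  qed
  have Kpos: "\<And>i. i \<in> K \<Longrightarrow> 0 < snd i"
    unfolding K_def by (simp add: case_prod_beta)
  obtain C where C: "countable C" "C \<subseteq> K"
      "pairwise (\<lambda>i j. disjnt (cball (fst i) (snd i)) (cball (fst j) (snd j))) C"
      "negligible (?S - (\<Union>i\<in>C. cball (fst i) (snd i)))"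
    by (rule Vitali_covering_theorem_cballs[of K snd ?S fst, OF Kpos Kcov])
  define V where "V = (\<Union>i\<in>C. cball (fst i) (snd i))"
  have "ennreal e * emeasure lebesgue V \<le> emeasure lebesgue (U - E)"
    unfolding V_def
  proof (rule emeasure_disjoint_Union_le_Diff[OF C(1) _ E])
    show "disjoint_family_on (\<lambda>i. cball (fst i) (snd i)) C"
      using C(3) unfolding disjoint_family_on_def pairwise_def disjnt_def by blast
  qed (use C(2) U(1) e in \<open>auto simp: K_def borel_open case_prod_unfold\<close>)
  also have "\<dots> < ennreal e * ennreal \<epsilon>"
    using U(3) e \<open>\<epsilon> > 0\<close> by (simp add: ennreal_mult)
  finally have V_small: "emeasure lebesgue V < ennreal \<epsilon>"
    by (metis leI mult_left_mono zero_le not_le)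
  have V: "V \<in> lmeasurable"
    using V_small C(1) unfolding V_def
    by (intro fmeasurableI) (auto intro: sets.countable_UN'' simp: order_less_trans[OF _ ennreal_less_top])
  have null: "?S - V \<in> null_sets lebesgue"
    using C(4) unfolding V_def by (simp add: negligible_iff_null_sets)
  show "\<exists>T. ?S \<subseteq> T \<and> T \<in> lmeasurable \<and> measure lebesgue T < \<epsilon>"
  proof (intro exI conjI)
    show "?S \<subseteq> V \<union> (?S - V)" by blast
    show "V \<union> (?S - V) \<in> lmeasurable"
      by (rule fmeasurable.Un[OF V negligible_imp_measurable]) (simp add: negligible_iff_null_sets null)
    show "measure lebesgue (V \<union> (?S - V)) < \<epsilon>"
      using measure_Un_null_set[OF fmeasurableD[OF V] null] V V_small
      by (simp add: emeasure_eq_measure2 ennreal_less_iff)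
  qed
qed

lemma bounded_measurable_absolutely_integrable_on:
  fixes g :: "'n::euclidean_space \<Rightarrow> 'a::euclidean_space"
  assumes g: "g \<in> borel_measurable borel" and M: "\<And>s. norm (g s) \<le> M"
    and S: "S \<in> lmeasurable"
  shows "g absolutely_integrable_on S"
proof (rule measurable_bounded_by_integrable_imp_absolutely_integrable)
  have "g \<in> borel_measurable lebesgue"
    using g by (simp add: measurable_completion)
  then show "g \<in> borel_measurable (lebesgue_on S)"
    by (rule measurable_restrict_space1)
  show "(\<lambda>_. M) integrable_on S"
    using S by (rule integrable_on_const)
qed (use S M in \<open>auto intro: fmeasurableD\<close>)

lemma integral_norm_deviation_le:
  fixes g :: "'n::euclidean_space \<Rightarrow> 'a::euclidean_space"
  assumes g: "g \<in> borel_measurable borel" and M: "\<And>s. norm (g s) \<le> M" "norm c \<le> M"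
    and S: "S \<in> lmeasurable" and E: "E \<in> sets lebesgue"
    and close: "\<And>s. s \<in> E \<Longrightarrow> norm (g s - c) \<le> r" and r: "0 \<le> r"
  shows "integral S (\<lambda>s. norm (g s - c))
           \<le> r * measure lebesgue S + 2 * M * measure lebesgue (S - E)"
proof -
  have SE: "S - E \<in> lmeasurable"
    using S E by (rule fmeasurable_Diff)
  have dev_bound: "norm (g s - c) \<le> 2 * M" for s
    using norm_triangle_ineq4[of "g s" c] M(1)[of s] M(2) by simp
  have "(\<lambda>s. g s - c) absolutely_integrable_on S"
    using g dev_bound by (intro bounded_measurable_absolutely_integrable_on[OF _ _ S]) auto
  then have dev_int: "(\<lambda>s. norm (g s - c)) integrable_on S"
    by (simp add: absolutely_integrable_on_def)
  have SE_S: "(S - E) \<inter> S = S - E" by blast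
  have ind_int: "indicat_real (S - E) integrable_on S"
    using SE by (simp add: integrable_on_indicator SE_S)
  have "integral S (\<lambda>s. norm (g s - c)) \<le> integral S (\<lambda>s. r + 2 * M * indicat_real (S - E) s)"
  proof (rule integral_le[OF dev_int])
    show "(\<lambda>s. r + 2 * M * indicat_real (S - E) s) integrable_on S"
      using integrable_on_const[OF S] ind_int by (intro integrable_add integrable_on_mult_right)
    fix s assume "s \<in> S"
    show "norm (g s - c) \<le> r + 2 * M * indicat_real (S - E) s"
      using close[of s] dev_bound[of s] \<open>s \<in> S\<close> r by (cases "s \<in> E") simp_all
  qed
  also have "\<dots> = integral S (\<lambda>s. r) + integral S (\<lambda>s. 2 * M * indicat_real (S - E) s)"
    by (rule integral_add[OF integrable_on_const[OF S] integrable_on_mult_right[OF ind_int]])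
  also have "integral S (\<lambda>s. r) = r * measure lebesgue S"
    using integral_mult_right[of S r "\<lambda>s. 1"] by (simp add: lmeasure_integral[OF S])
  also have "integral S (\<lambda>s. 2 * M * indicat_real (S - E) s) = 2 * M * measure lebesgue (S - E)"
    using integral_indicator[of "S - E" S] SE by (simp add: SE_S)
  finally show ?thesis .
qed

lemma integral_norm_deviation_le_at_dense_point:
  fixes g :: "'n::euclidean_space \<Rightarrow> 'a::euclidean_space"
  assumes g: "g \<in> borel_measurable borel" and M: "\<And>s. norm (g s) \<le> M"
    and q: "dist (g t) q < r" and dense: "t \<notin> low_density_points (g -` ball q r) e"
  shows "\<exists>\<delta>>0. \<forall>d. 0 < d \<and> d < \<delta> \<longrightarrow>
    integral (cball t d) (\<lambda>s. norm (g s - g t)) \<le> (2 * r + 2 * M * e) * measure lebesgue (cball t d)"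
proof -
  let ?E = "g -` ball q r"
  have E: "?E \<in> sets lebesgue"
    using measurable_sets_borel[OF g, of "ball q r"] by (simp add: sets_completionI_sets)
  have "t \<in> ?E"
    using q by (simp add: dist_commute)
  with dense obtain \<delta> where \<delta>: "\<delta> > 0"
    "\<And>d. 0 < d \<Longrightarrow> d < \<delta> \<Longrightarrow> measure lebesgue (cball t d - ?E) < e * measure lebesgue (cball t d)"
    unfolding low_density_points_def by (auto simp: not_le)
  have close: "norm (g s - g t) \<le> 2 * r" if "s \<in> ?E" for s
    using that q dist_triangle_less_add[of "g s" q r "g t" r] by (simp add: dist_commute dist_norm)
  have "0 \<le> M" "0 \<le> 2 * r"
    using M[of t] norm_ge_zero[of "g t"] q zero_le_dist[of "g t" q] by linarith+
  have "integral (cball t d) (\<lambda>s. norm (g s - g t)) \<le> (2 * r + 2 * M * e) * measure lebesgue (cball t d)"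
    if d: "0 < d" "d < \<delta>" for d
  proof -
    have "integral (cball t d) (\<lambda>s. norm (g s - g t))
        \<le> 2 * r * measure lebesgue (cball t d) + 2 * M * measure lebesgue (cball t d - ?E)"
      by (rule integral_norm_deviation_le[OF g M M lmeasurable_cball E close \<open>0 \<le> 2 * r\<close>])
    also have "\<dots> \<le> 2 * r * measure lebesgue (cball t d) + 2 * M * (e * measure lebesgue (cball t d))"
      using \<delta>(2)[OF d] \<open>0 \<le> M\<close> by (intro add_left_mono mult_left_mono) auto
    finally show ?thesis
      by (simp add: algebra_simps)
  qed
  with \<delta>(1) show ?thesis
    by blast
qed

lemma bounded_measurable_lebesgue_points:
  fixes g :: "'n::euclidean_space \<Rightarrow> 'a::euclidean_space"
  assumes g: "g \<in> borel_measurable borel" and M: "\<And>s. norm (g s) \<le> M"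
  obtains Z where "negligible Z"
    "\<And>t \<epsilon>. t \<notin> Z \<Longrightarrow> \<epsilon> > 0 \<Longrightarrow> \<exists>\<delta>>0. \<forall>d. 0 < d \<and> d < \<delta> \<longrightarrow>
        integral (cball t d) (\<lambda>s. norm (g s - g t)) \<le> \<epsilon> * measure lebesgue (cball t d)"
proof -
  obtain D :: "'a set" where D: "countable D" "\<And>X. open X \<Longrightarrow> X \<noteq> {} \<Longrightarrow> \<exists>q\<in>D. q \<in> X"
    using countable_dense_exists by blast
  define Z where "Z = (\<Union>(q, r, e)\<in>D \<times> \<rat> \<times> (\<rat> \<inter> {0<..}). low_density_points (g -` ball q r) e)"
  have "negligible Z"
    unfolding Z_def using D(1) countable_rat measurable_sets_borel[OF g]
    by (intro negligible_countable_Union countable_image countable_SIGMA)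
       (auto intro!: negligible_low_density_points sets_completionI_sets)
  moreover have "\<exists>\<delta>>0. \<forall>d. 0 < d \<and> d < \<delta> \<longrightarrow>
      integral (cball t d) (\<lambda>s. norm (g s - g t)) \<le> \<epsilon> * measure lebesgue (cball t d)"
    if t: "t \<notin> Z" and \<epsilon>: "\<epsilon> > 0" for t \<epsilon>
  proof -
    have "0 \<le> M"
      using M[of t] norm_ge_zero order_trans by blast
    obtain r where r: "r \<in> \<rat>" "0 < r" "r < \<epsilon> / 4"
      using Rats_dense_in_real[of 0 "\<epsilon> / 4"] \<epsilon> by auto
    obtain e where e: "e \<in> \<rat>" "0 < e" "e < \<epsilon> / (4 * (M + 1))"
      using Rats_dense_in_real[of 0 "\<epsilon> / (4 * (M + 1))"] \<epsilon> \<open>0 \<le> M\<close> by auto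
    obtain q where q: "q \<in> D" "dist (g t) q < r"
      using D(2)[of "ball (g t) r"] r(2) by auto
    have "t \<notin> low_density_points (g -` ball q r) e"
      using t q(1) r(1) e(1,2) unfolding Z_def by blast
    then obtain \<delta> where \<delta>: "\<delta> > 0" "\<forall>d. 0 < d \<and> d < \<delta> \<longrightarrow>
        integral (cball t d) (\<lambda>s. norm (g s - g t)) \<le> (2 * r + 2 * M * e) * measure lebesgue (cball t d)"
      using integral_norm_deviation_le_at_dense_point[OF g M q(2)] by blast
    have small: "2 * r + 2 * M * e \<le> \<epsilon>"
    proof -
      have "M * e \<le> (M + 1) * e" using e(2) by simp
      also have "\<dots> \<le> \<epsilon> / 4"
        using e(3) \<open>0 \<le> M\<close> by (simp add: field_simps)
      finally show ?thesis using r(3) by simp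
    qed
    show ?thesis
    proof (intro exI conjI allI impI)
      fix d assume "0 < d \<and> d < \<delta>"
      then have "integral (cball t d) (\<lambda>s. norm (g s - g t))
          \<le> (2 * r + 2 * M * e) * measure lebesgue (cball t d)"
        using \<delta>(2) by blast
      also have "\<dots> \<le> \<epsilon> * measure lebesgue (cball t d)"
        using small by (rule mult_right_mono) simp
      finally show "integral (cball t d) (\<lambda>s. norm (g s - g t)) \<le> \<epsilon> * measure lebesgue (cball t d)" .
    qed (rule \<delta>(1))
  qed
  ultimately show ?thesis using that by blast
qed

lemma norm_integral_deviation_le_integral:
  fixes g :: "real \<Rightarrow> 'a::euclidean_space"
  assumes g_int: "\<And>u v. g integrable_on {u..v}"
    and dev_int: "\<And>u v. (\<lambda>s. norm (g s - g t)) integrable_on {u..v}"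
    and "u \<le> w" and sub: "{u..w} \<subseteq> cball t d"
  shows "norm (integral {u..w} g - (w - u) *\<^sub>R g t) \<le> integral (cball t d) (\<lambda>s. norm (g s - g t))"
proof -
  have "integral {u..w} (\<lambda>s. g s - g t) = integral {u..w} g - integral {u..w} (\<lambda>s. g t)"
    by (rule integral_diff) (use g_int in auto)
  then have "integral {u..w} g - (w - u) *\<^sub>R g t = integral {u..w} (\<lambda>s. g s - g t)"
    using \<open>u \<le> w\<close> by simp
  also have "norm \<dots> \<le> integral {u..w} (\<lambda>s. norm (g s - g t))"
    using g_int dev_int by (intro integral_norm_bound_integral integrable_diff) auto
  also have "\<dots> \<le> integral (cball t d) (\<lambda>s. norm (g s - g t))"
    using dev_int by (intro integral_subset_le[OF sub]) (auto simp: cball_eq_atLeastAtMost)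
  finally show ?thesis .
qed

lemma indefinite_integral_has_derivative_at_lebesgue_point:
  fixes g :: "real \<Rightarrow> 'a::euclidean_space"
  assumes g_int: "\<And>u v. g integrable_on {u..v}"
    and dev_int: "\<And>u v. (\<lambda>s. norm (g s - g t)) integrable_on {u..v}"
    and lebesgue_point: "\<And>\<epsilon>. \<epsilon> > 0 \<Longrightarrow> \<exists>\<delta>>0. \<forall>d. 0 < d \<and> d < \<delta> \<longrightarrow>
        integral (cball t d) (\<lambda>s. norm (g s - g t)) \<le> \<epsilon> * measure lebesgue (cball t d)"
    and "a < t"
  shows "((\<lambda>s. integral {a..s} g) has_derivative (\<lambda>h. h *\<^sub>R g t)) (at t)"
  unfolding has_derivative_at_alt
proof (intro conjI allI impI bounded_linear_scaleR_left)
  fix \<epsilon> :: real assume "\<epsilon> > 0"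
  then obtain \<delta> where \<delta>: "\<delta> > 0" "\<And>d. 0 < d \<Longrightarrow> d < \<delta> \<Longrightarrow>
      integral (cball t d) (\<lambda>s. norm (g s - g t)) \<le> \<epsilon> / 2 * measure lebesgue (cball t d)"
    using lebesgue_point[of "\<epsilon> / 2"] by auto
  show "\<exists>\<delta>'>0. \<forall>y. norm (y - t) < \<delta>' \<longrightarrow>
      norm (integral {a..y} g - integral {a..t} g - (y - t) *\<^sub>R g t) \<le> \<epsilon> * norm (y - t)"
  proof (intro exI[of _ "min \<delta> (t - a)"] conjI allI impI)
    show "0 < min \<delta> (t - a)" using \<delta>(1) \<open>a < t\<close> by simp
    fix y :: real assume y: "norm (y - t) < min \<delta> (t - a)"
    let ?d = "\<bar>y - t\<bar>"
    have "norm (integral {a..y} g - integral {a..t} g - (y - t) *\<^sub>R g t)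
        \<le> integral (cball t ?d) (\<lambda>s. norm (g s - g t))"
    proof (cases "t \<le> y")
      case True
      have "integral {a..y} g = integral {a..t} g + integral {t..y} g"
        using g_int \<open>a < t\<close> True by (simp add: Henstock_Kurzweil_Integration.integral_combine)
      then show ?thesis
        using norm_integral_deviation_le_integral[OF g_int dev_int True, of ?d] True
        by (simp add: cball_eq_atLeastAtMost algebra_simps)
    next
      case False
      then have "a \<le> y" using y by simp
      have "integral {a..t} g = integral {a..y} g + integral {y..t} g"
        using g_int \<open>a \<le> y\<close> False by (simp add: Henstock_Kurzweil_Integration.integral_combine)
      then show ?thesis
        using norm_integral_deviation_le_integral[OF g_int dev_int, of y t ?d] False
        by (simp add: cball_eq_atLeastAtMost algebra_simps norm_minus_commute)
    qed
    also have "\<dots> \<le> \<epsilon> * norm (y - t)"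
    proof (cases "y = t")
      case False
      then show ?thesis
        using \<delta>(2)[of ?d] y by (simp add: cball_eq_atLeastAtMost)
    qed simp
    finally show "norm (integral {a..y} g - integral {a..t} g - (y - t) *\<^sub>R g t) \<le> \<epsilon> * norm (y - t)" .
  qed
qed

lemma bounded_measurable_indefinite_integral_has_derivative_ae:
  fixes g :: "real \<Rightarrow> 'a::euclidean_space"
  assumes g: "g \<in> borel_measurable borel" and M: "\<And>s. norm (g s) \<le> M"
  obtains Z where "negligible Z"
    "\<And>a t. t \<notin> Z \<Longrightarrow> a < t \<Longrightarrow> ((\<lambda>s. integral {a..s} g) has_derivative (\<lambda>h. h *\<^sub>R g t)) (at t)"
proof -
  obtain Z where Z: "negligible Z"
    "\<And>t \<epsilon>. t \<notin> Z \<Longrightarrow> \<epsilon> > 0 \<Longrightarrow> \<exists>\<delta>>0. \<forall>d. 0 < d \<and> d < \<delta> \<longrightarrow>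
        integral (cball t d) (\<lambda>s. norm (g s - g t)) \<le> \<epsilon> * measure lebesgue (cball t d)"
    using bounded_measurable_lebesgue_points[OF g M] by blast
  have g_int: "g integrable_on {u..v}" for u v
    using bounded_measurable_absolutely_integrable_on[OF g M lmeasurable_interval(1)]
    by (simp add: absolutely_integrable_on_def)
  have dev_int: "(\<lambda>s. norm (g s - g t)) integrable_on {u..v}" for t u v
  proof -
    have "norm (g s - g t) \<le> 2 * M" for s
      using norm_triangle_ineq4[of "g s" "g t"] M[of s] M[of t] by simp
    then have "(\<lambda>s. g s - g t) absolutely_integrable_on {u..v}"
      using g by (intro bounded_measurable_absolutely_integrable_on[of _ "2 * M"]) auto
    then show ?thesis by (simp add: absolutely_integrable_on_def)
  qed
  show ?thesis
    using that[OF Z(1)] indefinite_integral_has_derivative_at_lebesgue_point[OF g_int dev_int Z(2)]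
    by blast
qed

section \<open>Lipschitz functions with almost everywhere vanishing derivative\<close>

lemma continuous_on_negligible_image_imp_constant:
  fixes f :: "real \<Rightarrow> real"
  assumes S: "connected S" and f: "continuous_on S f" and neg: "negligible (f ` S)"
  shows "\<exists>c. \<forall>t\<in>S. f t = c"
proof -
  have "is_interval (f ` S)"
    using connected_continuous_image[OF f S] by (simp add: is_interval_connected_1)
  have le: "f x \<le> f y" if xy: "x \<in> S" "y \<in> S" for x y
  proof (rule ccontr)
    assume "\<not> f x \<le> f y"
    have "z \<in> f ` S" if "z \<in> {f y..f x}" for z
      using is_interval_1[THEN iffD1, OF \<open>is_interval (f ` S)\<close>, rule_format, of "f y" "f x" z] xy that
      by auto
    then have "negligible {f y..f x}"
      by (meson neg negligible_subset subsetI)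
    then show False
      using negligible_interval(1)[of "f y" "f x"] \<open>\<not> f x \<le> f y\<close> by simp
  qed
  show ?thesis
  proof (cases "S = {}")
    case False
    then obtain x0 where "x0 \<in> S" by blast
    then show ?thesis
      using le by (intro exI[of _ "f x0"]) (auto intro: order_antisym)
  qed simp
qed

lemma negligible_image_zero_derivative:
  fixes f :: "real \<Rightarrow> real"
  assumes der: "\<And>t. t \<in> S \<Longrightarrow> (f has_derivative (\<lambda>h. 0)) (at t)"
  shows "negligible (f ` S)"
proof -
  let ?F = "\<lambda>x::real^1. vec (f (x $ 1)) :: real^1"
  have "(?F has_derivative (*\<^sub>R) 0) (at x within vec ` S)" if x: "x \<in> vec ` S" for x
  proof -
    obtain z where z: "z \<in> S" "x = vec z" using x by blast
    have "(f has_derivative (\<lambda>h. h * 0)) (at z within S)"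
      using der[OF z(1)] has_derivative_at_withinI by simp
    then show ?thesis using has_derivative_vector_1[of f "\<lambda>_. 0" z S] z by simp
  qed
  moreover have "matrix ((*\<^sub>R) (0::real) :: real^1 \<Rightarrow> real^1) = 0"
    by (simp add: matrix_def vec_eq_iff)
  ultimately have "negligible (?F ` vec ` S)"
    by (intro baby_Sard[where f' = "\<lambda>_. (*\<^sub>R) 0"]) auto
  then have "negligible (vec ` f ` S :: (real^1) set)"
    by (simp add: image_image)
  then have "negligible ((\<lambda>x::real^1. x $ 1) ` vec ` f ` S)"
    by (rule negligible_differentiable_image_negligible[rotated])
       (auto intro!: bounded_linear_imp_differentiable_on)
  then show ?thesis
    by (simp add: image_image)
qed

lemma lipschitz_zero_derivative_ae_imp_constant:
  fixes f :: "real \<Rightarrow> real"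
  assumes S: "connected S" and lip: "L-lipschitz_on S f" and N: "negligible N"
    and der: "\<And>t. t \<in> S - N \<Longrightarrow> (f has_derivative (\<lambda>h. 0)) (at t)"
  shows "\<exists>c. \<forall>t\<in>S. f t = c"
proof (rule continuous_on_negligible_image_imp_constant[OF S])
  show "continuous_on S f"
    using lip by (rule lipschitz_on_continuous_on)
  have "negligible (f ` (S - N))"
    using der by (rule negligible_image_zero_derivative)
  moreover have "negligible (f ` (S \<inter> N))"
  proof (rule negligible_locally_Lipschitz_image)
    show "negligible (S \<inter> N)"
      using N by (simp add: negligible_Int)
    fix x assume "x \<in> S \<inter> N"
    then show "\<exists>U B. open U \<and> x \<in> U \<and> (\<forall>y\<in>S \<inter> N \<inter> U. norm (f y - f x) \<le> B * norm (y - x))"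
      using lipschitz_onD[OF lip] by (intro exI[of _ UNIV] exI[of _ L]) (auto simp: dist_norm)
  qed simp
  ultimately show "negligible (f ` S)"
    by (metis Un_Diff_Int image_Un negligible_Un)
qed

section \<open>Times at which paths visit a null set\<close>

lemma floor_mult_divide_LIMSEQ:
  "(\<lambda>n. real_of_int \<lfloor>t * real (Suc n)\<rfloor> / real (Suc n)) \<longlonglongrightarrow> (t::real)"
proof (rule tendsto_sandwich[OF always_eventually always_eventually])
  show "\<forall>n. t - inverse (real (Suc n)) \<le> real_of_int \<lfloor>t * real (Suc n)\<rfloor> / real (Suc n)"
  proof
    fix n
    let ?k = "real (Suc n)"
    have "t - inverse ?k = (t * ?k - 1) / ?k"
      by (simp add: field_simps)
    also have "\<dots> \<le> real_of_int \<lfloor>t * ?k\<rfloor> / ?k"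
      using real_of_int_floor_gt_diff_one[of "t * ?k"] by (intro divide_right_mono) auto
    finally show "t - inverse ?k \<le> real_of_int \<lfloor>t * ?k\<rfloor> / ?k" .
  qed
  show "\<forall>n. real_of_int \<lfloor>t * real (Suc n)\<rfloor> / real (Suc n) \<le> t"
    by (simp add: field_simps)
  show "(\<lambda>n. t - inverse (real (Suc n))) \<longlonglongrightarrow> t"
    using tendsto_diff[OF tendsto_const LIMSEQ_inverse_real_of_nat, of t] by simp
qed simp

text \<open>Clamping time to \<open>[0,T]\<close> extends paths continuously to \<open>\<real>\<close>; evaluation at the grid times
  \<open>\<lfloor>t (n+1)\<rfloor> / (n+1)\<close> is measurable and converges to evaluation at \<open>t\<close>.\<close>

lemma measurable_eval_clamped:
  fixes M :: "(real \<Rightarrow> 'b::metric_space) measure"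
  assumes cont: "\<And>\<gamma>. \<gamma> \<in> space M \<Longrightarrow> continuous_on {0..T} \<gamma>"
    and eval: "\<And>s. s \<in> {0..T} \<Longrightarrow> (\<lambda>\<gamma>. \<gamma> s) \<in> borel_measurable M"
    and T: "0 \<le> T"
  shows "(\<lambda>x. fst x (max 0 (min T (snd x)))) \<in> borel_measurable (M \<Otimes>\<^sub>M lborel)"
proof (rule borel_measurable_LIMSEQ_metric)
  let ?cl = "\<lambda>t. max 0 (min T t)"
  have cl: "?cl t \<in> {0..T}" for t
    using T by auto
  fix n :: nat
  define f where "f k x = fst x (?cl (real_of_int k / real (Suc n)))"
    for k :: int and x :: "(real \<Rightarrow> 'b) \<times> real"
  define g where "g x = \<lfloor>snd x * real (Suc n)\<rfloor>" for x :: "(real \<Rightarrow> 'b) \<times> real"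
  have "(\<lambda>x. f (g x) x) \<in> borel_measurable (M \<Otimes>\<^sub>M lborel)"
  proof (rule measurable_compose_countable'[where I = UNIV and f = f and g = g])
    show "(\<lambda>x. f k x) \<in> borel_measurable (M \<Otimes>\<^sub>M lborel)" for k
      unfolding f_def by (rule measurable_compose[OF measurable_fst eval[OF cl]])
    show "g \<in> measurable (M \<Otimes>\<^sub>M lborel) (count_space UNIV)"
      unfolding g_def by measurable
  qed simp
  then show "(\<lambda>x. fst x (?cl (real_of_int \<lfloor>snd x * real (Suc n)\<rfloor> / real (Suc n))))
      \<in> borel_measurable (M \<Otimes>\<^sub>M lborel)"
    by (simp add: f_def g_def)
next
  fix x :: "(real \<Rightarrow> 'b) \<times> real" assume "x \<in> space (M \<Otimes>\<^sub>M lborel)"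
  then have "continuous_on {0..T} (fst x)"
    by (auto simp: space_pair_measure intro: cont)
  moreover have "(\<lambda>n. max 0 (min T (real_of_int \<lfloor>snd x * real (Suc n)\<rfloor> / real (Suc n))))
      \<longlonglongrightarrow> max 0 (min T (snd x))"
    by (intro tendsto_intros floor_mult_divide_LIMSEQ)
  ultimately show "(\<lambda>n. fst x (max 0 (min T (real_of_int \<lfloor>snd x * real (Suc n)\<rfloor> / real (Suc n)))))
      \<longlonglongrightarrow> fst x (max 0 (min T (snd x)))"
    by (rule continuous_on_tendsto_compose) (use T in auto)
qed

lemma AE_negligible_visits:
  fixes M :: "(real \<Rightarrow> 'b::metric_space) measure"
  assumes M: "sigma_finite_measure M"
    and cont: "\<And>\<gamma>. \<gamma> \<in> space M \<Longrightarrow> continuous_on {0..T} \<gamma>"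
    and eval: "\<And>s. s \<in> {0..T} \<Longrightarrow> (\<lambda>\<gamma>. \<gamma> s) \<in> borel_measurable M"
    and A: "A \<in> sets borel" and T: "0 \<le> T"
    and null: "\<And>s. s \<in> {0..T} \<Longrightarrow> emeasure M {\<gamma>\<in>space M. \<gamma> s \<in> A} = 0"
  shows "AE \<gamma> in M. negligible {t\<in>{0..T}. \<gamma> t \<in> A}"
proof -
  interpret M: sigma_finite_measure M by (rule M)
  interpret P: pair_sigma_finite M lborel
    by (intro pair_sigma_finite.intro M lborel.sigma_finite_measure_axioms)
  define F :: "(real \<Rightarrow> 'b) \<times> real \<Rightarrow> ennreal" where
    "F x = indicator {0..T} (snd x) * indicator A (fst x (max 0 (min T (snd x))))" for x
  have F: "F \<in> borel_measurable (M \<Otimes>\<^sub>M lborel)"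
    unfolding F_def using measurable_eval_clamped[OF cont eval T] A by measurable
  have visit: "F (\<gamma>, t) = indicator {t\<in>{0..T}. \<gamma> t \<in> A} t" for \<gamma> t
    by (auto simp: F_def indicator_def)
  have "(\<integral>\<^sup>+\<gamma>. F (\<gamma>, t) \<partial>M) = 0" for t
  proof (cases "t \<in> {0..T}")
    case True
    have "(\<integral>\<^sup>+\<gamma>. F (\<gamma>, t) \<partial>M) = (\<integral>\<^sup>+\<gamma>. indicator {\<gamma>\<in>space M. \<gamma> t \<in> A} \<gamma> \<partial>M)"
      using True by (intro nn_integral_cong) (simp add: visit indicator_def)
    also have "\<dots> = 0"
      using measurable_sets[OF eval[OF True] A] null[OF True]
      by (simp add: vimage_def Int_def conj_commute)
    finally show ?thesis .
  qed (simp add: F_def)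
  then have "(\<integral>\<^sup>+\<gamma>. (\<integral>\<^sup>+t. F (\<gamma>, t) \<partial>lborel) \<partial>M) = 0"
    using P.Fubini[OF F] by simp
  then have "AE \<gamma> in M. (\<integral>\<^sup>+t. F (\<gamma>, t) \<partial>lborel) = 0"
    using lborel.borel_measurable_nn_integral_fst[OF F] by (simp add: nn_integral_0_iff_AE)
  moreover have "AE \<gamma> in M. (\<integral>\<^sup>+t. F (\<gamma>, t) \<partial>lborel) = 0 \<longrightarrow> negligible {t\<in>{0..T}. \<gamma> t \<in> A}"
  proof (rule AE_I2, rule impI)
    fix \<gamma> assume "\<gamma> \<in> space M" and \<gamma>: "(\<integral>\<^sup>+t. F (\<gamma>, t) \<partial>lborel) = 0"
    have F\<gamma>: "(\<lambda>t. F (\<gamma>, t)) \<in> borel_measurable lborel"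
      using F \<open>\<gamma> \<in> space M\<close> by measurable
    have S: "{t\<in>{0..T}. \<gamma> t \<in> A} = {t\<in>space lborel. F (\<gamma>, t) \<noteq> 0}"
      by (auto simp: visit split: split_indicator)
    have "AE t in lborel. F (\<gamma>, t) = 0"
      using \<gamma> F\<gamma> by (simp add: nn_integral_0_iff_AE)
    moreover have "{t\<in>space lborel. F (\<gamma>, t) \<noteq> 0} \<in> sets lborel"
      using F\<gamma> by measurable
    ultimately have "{t\<in>space lborel. F (\<gamma>, t) \<noteq> 0} \<in> null_sets lborel"
      using AE_iff_null[of lborel "\<lambda>t. F (\<gamma>, t) = 0"] by simp
    then show "negligible {t\<in>{0..T}. \<gamma> t \<in> A}"
      unfolding S by (simp add: negligible_iff_null_sets null_sets_completionI)
  qed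
  ultimately show ?thesis
    by (rule AE_mp)
qed

section \<open>The torus and the path space\<close>

lemma tadd_tor: "tadd (tor x) v = tor (x + v)"
  by (simp add: tadd_def tor_def cis_mult distrib_left)

lemma space_Gamma_M: "space (Gamma_M T) = Gamma T"
  unfolding Gamma_M_def Gamma_def by (auto simp: space_restrict_space space_PiM PiE_def)

lemma measurable_eval_Gamma_M:
  "s \<in> {0..T} \<Longrightarrow> (\<lambda>\<gamma>. \<gamma> s) \<in> borel_measurable (Gamma_M T)"
  unfolding Gamma_M_def by (intro measurable_restrict_space1 measurable_component_singleton)

lemma borel_measurable_Arg: "Arg \<in> borel_measurable borel"
proof -
  define U :: "complex set" where "U = - \<real>\<^sub>\<le>\<^sub>0"
  have U: "U \<in> sets borel"
    unfolding U_def by (intro borel_open open_Compl closed_nonpos_Reals_complex)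
  have "continuous_on U Arg"
    unfolding U_def by (intro continuous_at_imp_continuous_on ballI continuous_at_Arg) auto
  then have "Arg \<in> borel_measurable (restrict_space borel {z. z \<in> U})"
    using borel_measurable_continuous_on_restrict by simp
  moreover have "(\<lambda>z. if z = 0 then 0 else pi) \<in> borel_measurable (restrict_space borel {z. z \<notin> U})"
    by (intro measurable_restrict_space1) measurable
  ultimately have "(\<lambda>z. if z \<in> U then Arg z else if z = 0 then 0 else pi) \<in> borel_measurable borel"
    using U by (subst measurable_If_restrict_space_iff) auto
  moreover have "Arg = (\<lambda>z. if z \<in> U then Arg z else if z = 0 then 0 else pi)"
    unfolding U_def by (auto simp: fun_eq_iff Arg_eq_pi_iff Arg_zero nonpos_Reals_def)
  ultimately show ?thesis
    by simp
qed

lemma Arg_cis_diff_Ints: "\<exists>k::int. Arg (cis \<theta>) = \<theta> - of_int k * (2 * pi)"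
  using Arg_exp_diff_2pi[of "\<i> * complex_of_real \<theta>"] by (metis cis_conv_exp Im_i_times Re_complex_of_real)

text \<open>A Borel right inverse of \<open>tor\<close> modulo \<open>\<int>\<^sup>2\<close>: the image \<open>tor ` N\<close> of a Borel set need not be
  Borel, but its preimage under \<open>torus_angle\<close> after \<open>\<int>\<^sup>2\<close>-saturation is.\<close>

definition torus_angle :: "complex \<times> complex \<Rightarrow> real \<times> real" where
  "torus_angle z = (Arg (fst z) / (2 * pi), Arg (snd z) / (2 * pi))"

lemma borel_measurable_torus_angle: "torus_angle \<in> borel_measurable borel"
proof -
  have fst: "(fst :: complex \<times> complex \<Rightarrow> complex) \<in> borel_measurable borel"
    and snd: "(snd :: complex \<times> complex \<Rightarrow> complex) \<in> borel_measurable borel"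
    by (intro borel_measurable_continuous_onI continuous_intros)+
  have "(\<lambda>z::complex \<times> complex. Arg (fst z)) \<in> borel_measurable borel"
    using measurable_compose[OF fst borel_measurable_Arg] by (simp add: comp_def)
  moreover have "(\<lambda>z::complex \<times> complex. Arg (snd z)) \<in> borel_measurable borel"
    using measurable_compose[OF snd borel_measurable_Arg] by (simp add: comp_def)
  ultimately show ?thesis
    unfolding torus_angle_def by (intro borel_measurable_Pair borel_measurable_divide) simp_all
qed

lemma diff_torus_angle_tor: "x - torus_angle (tor x) \<in> \<int> \<times> \<int>"
proof -
  obtain i :: int where i: "Arg (cis (2 * pi * fst x)) = 2 * pi * fst x - of_int i * (2 * pi)"
    using Arg_cis_diff_Ints by blast
  obtain j :: int where j: "Arg (cis (2 * pi * snd x)) = 2 * pi * snd x - of_int j * (2 * pi)"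
    using Arg_cis_diff_Ints by blast
  have "x - torus_angle (tor x) = (of_int i, of_int j)"
    unfolding torus_angle_def tor_def using i j by (simp add: prod_eq_iff field_simps)
  then show ?thesis
    by simp
qed

lemma emeasure_tleb:
  assumes "A \<in> sets borel"
  shows "emeasure tleb A = emeasure lborel (tor -` A \<inter> {0..<1} \<times> {0..<1})"
proof -
  let ?R = "{0..<1} \<times> {0..<1} :: (real \<times> real) set"
  have R: "?R \<in> sets lborel"
    unfolding sets_lborel by (subst borel_prod[symmetric]) (rule pair_measureI; simp)
  have "tor \<in> borel_measurable borel"
    unfolding tor_def by (intro borel_measurable_continuous_onI continuous_intros)
  then have "tor \<in> measurable (restrict_space lborel ?R) borel"
    by (intro measurable_restrict_space1) simp
  then show ?thesis
    unfolding tleb_def using assms R by (simp add: emeasure_distr emeasure_restrict_space)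
qed

lemma translate_null_sets_lborel:
  fixes N :: "(real \<times> real) set"
  assumes N: "N \<in> null_sets lborel"
  shows "(\<lambda>y. y + k) -` N \<in> null_sets lborel"
proof -
  have k: "(+) k \<in> measurable lborel borel"
    by simp
  have shift: "(\<lambda>y. y + k) = (+) k"
    by (simp add: fun_eq_iff add.commute)
  have "emeasure lborel ((+) k -` N) = emeasure (distr lborel borel ((+) k)) N"
    using emeasure_distr[OF k, of N] null_setsD2[OF N] by simp
  also have "\<dots> = 0"
    using null_setsD1[OF N] by (simp add: lborel_distr_plus)
  finally show ?thesis
    unfolding shift using measurable_sets[OF k, of N] N by (simp add: null_sets_def)
qed

lemma tor_image_subset_tleb_null:
  assumes N: "N \<in> null_sets lborel"
  obtains A where "A \<in> sets borel" "emeasure tleb A = 0" "tor ` N \<subseteq> A"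
proof
  define N' where "N' = (\<Union>k\<in>\<int> \<times> \<int>. (\<lambda>y. y + k) -` N)"
  have N': "N' \<in> null_sets lborel"
    unfolding N'_def using N
    by (intro null_sets_UN' countable_SIGMA translate_null_sets_lborel) (auto simp: Ints_def)
  have periodic: "x + k \<in> N'" if "x \<in> N'" "k \<in> \<int> \<times> \<int>" for x k
  proof -
    obtain k' where "k' \<in> \<int> \<times> \<int>" "x + k' \<in> N"
      using \<open>x \<in> N'\<close> unfolding N'_def by auto
    moreover have "x + k + (k' - k) = x + k'"
      by simp
    moreover have "k' - k \<in> \<int> \<times> \<int>"
      using \<open>k' \<in> \<int> \<times> \<int>\<close> \<open>k \<in> \<int> \<times> \<int>\<close> by (auto simp: mem_Times_iff)
    ultimately show ?thesis
      unfolding N'_def by (metis (no_types, lifting) UN_iff vimageI)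
  qed
  have torus_angle_N': "torus_angle (tor x) \<in> N' \<longleftrightarrow> x \<in> N'" for x
  proof -
    have "torus_angle (tor x) - x \<in> \<int> \<times> \<int>"
      using diff_torus_angle_tor[of x] Ints_minus[of "fst x - fst (torus_angle (tor x))"]
        Ints_minus[of "snd x - snd (torus_angle (tor x))"]
      by (auto simp: mem_Times_iff)
    then show ?thesis
      using periodic[of x "torus_angle (tor x) - x"]
        periodic[of "torus_angle (tor x)" "x - torus_angle (tor x)"] diff_torus_angle_tor[of x]
      by auto
  qed
  define A where "A = torus_angle -` N'"
  show "A \<in> sets borel"
    using measurable_sets_borel[OF borel_measurable_torus_angle, of N'] null_setsD2[OF N']
    unfolding A_def by simp
  have "tor -` A \<inter> {0..<1} \<times> {0..<1} \<subseteq> N'"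
  proof
    fix x assume "x \<in> tor -` A \<inter> {0..<1} \<times> {0..<1}"
    then show "x \<in> N'"
      using torus_angle_N'[of x] by (simp add: A_def)
  qed
  then have "emeasure tleb A \<le> emeasure lborel N'"
    unfolding emeasure_tleb[OF \<open>A \<in> sets borel\<close>] using N' by (intro emeasure_mono) auto
  then show "emeasure tleb A = 0"
    using null_setsD1[OF N'] by simp
  have "N \<subseteq> N'"
    unfolding N'_def by (auto intro: UN_I[of 0] simp: mem_Times_iff)
  then show "tor ` N \<subseteq> A"
    unfolding A_def by (auto simp: torus_angle_N')
qed

lemma emeasure_eval_null:
  assumes eval: "(\<lambda>\<gamma>. \<gamma> s) \<in> measurable M borel"
    and marginal: "distr M borel (\<lambda>\<gamma>. \<gamma> s) = density tleb f" and f: "f \<in> borel_measurable borel"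
    and A: "A \<in> sets borel" "emeasure tleb A = 0"
  shows "emeasure M {\<gamma>\<in>space M. \<gamma> s \<in> A} = 0"
proof -
  have sets_tleb: "sets tleb = sets borel"
    unfolding tleb_def by simp
  have "emeasure M {\<gamma>\<in>space M. \<gamma> s \<in> A} = emeasure (density tleb f) A"
    using emeasure_distr[OF eval A(1)] marginal by (simp add: vimage_def Int_def conj_commute)
  also have "\<dots> = (\<integral>\<^sup>+x. f x * indicator A x \<partial>tleb)"
  proof (rule emeasure_density)
    show "f \<in> borel_measurable tleb"
      using f by (subst measurable_cong_sets[OF sets_tleb refl])
  qed (use A(1) sets_tleb in simp)
  also have "\<dots> = 0"
    using A sets_tleb by (intro nn_integral_null_set) (simp add: null_sets_def)
  finally show ?thesis .
qed

lemma nearly_incompressible_density_measurable: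
  assumes "nearly_incompressible T b \<rho>"
  shows "(\<lambda>x. ennreal (\<rho> s x)) \<in> borel_measurable borel"
proof -
  have \<rho>: "(\<lambda>(t, x). \<rho> t x) \<in> borel_measurable borel"
    using assms unfolding nearly_incompressible_def by blast
  have slice: "(\<lambda>x::complex \<times> complex. (s, x)) \<in> borel_measurable borel"
    by (intro borel_measurable_continuous_onI continuous_intros)
  have "(\<lambda>x. \<rho> s x) \<in> borel_measurable borel"
    using measurable_compose[OF slice \<rho>] by (simp add: o_def)
  then show ?thesis
    by simp
qed

lemma AE_lborel_imp_off_tleb_null:
  assumes "AE x in lborel. P x"
  obtains A where "A \<in> sets borel" "emeasure tleb A = 0" "\<forall>x. tor x \<notin> A \<longrightarrow> P x"
proof -
  obtain N where N: "N \<in> null_sets lborel" "\<forall>x\<in>space lborel - N. P x"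
    using assms by (rule AE_E3) blast
  obtain A where A: "A \<in> sets borel" "emeasure tleb A = 0" "tor ` N \<subseteq> A"
    by (rule tor_image_subset_tleb_null[OF N(1)])
  moreover have "\<forall>x. tor x \<notin> A \<longrightarrow> P x"
    using A(3) N(2) by (auto simp: image_subset_iff)
  ultimately show ?thesis
    using that by blast
qed

lemma AE_negligible_visits_tleb_null:
  assumes \<eta>: "finite_measure \<eta>" "sets \<eta> = sets (Gamma_M T)" and T: "0 \<le> T"
    and marginal: "\<And>t. t \<in> {0..T} \<Longrightarrow> distr \<eta> borel (\<lambda>\<gamma>. \<gamma> t) = density tleb (f t)"
    and f: "\<And>t. f t \<in> borel_measurable borel"
    and A: "A \<in> sets borel" "emeasure tleb A = 0"
  shows "AE \<gamma> in \<eta>. negligible {t\<in>{0..T}. \<gamma> t \<in> A}"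
proof -
  have eval: "(\<lambda>\<gamma>. \<gamma> s) \<in> borel_measurable \<eta>" if "s \<in> {0..T}" for s
    using measurable_eval_Gamma_M[OF that] by (simp add: measurable_cong_sets[OF \<eta>(2) refl])
  show ?thesis
  proof (rule AE_negligible_visits[OF _ _ eval A(1) T])
    show "sigma_finite_measure \<eta>"
      using \<eta>(1) unfolding finite_measure_def by blast
    show "continuous_on {0..T} \<gamma>" if "\<gamma> \<in> space \<eta>" for \<gamma>
      using that sets_eq_imp_space_eq[OF \<eta>(2)] by (simp add: space_Gamma_M Gamma_def)
    show "emeasure \<eta> {\<gamma> \<in> space \<eta>. \<gamma> s \<in> A} = 0" if "s \<in> {0..T}" for s
      by (rule emeasure_eval_null[OF eval[OF that] marginal[OF that] f A])
  qed
qed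

section \<open>Integral curves\<close>

lemma bounded_measurable_set_integral_eq_integral:
  fixes g :: "real \<Rightarrow> 'a::euclidean_space"
  assumes g: "g \<in> borel_measurable borel" and M: "\<And>s. norm (g s) \<le> M"
    and S: "S \<in> sets borel" "emeasure lborel S < \<infinity>"
  shows "(LINT s:S|lborel. g s) = integral S g"
proof (rule set_borel_integral_eq_integral(2))
  show "set_integrable lborel S g"
    unfolding set_integrable_def using g M S
    by (intro integrableI_bounded_set_indicator[where B = M]) auto
qed

lemma linear_rotated_gradient_annihilates:
  fixes D :: "real \<times> real \<Rightarrow> real"
  assumes D: "linear D" and grad: "(- D (0, 1), D (1, 0)) = r *\<^sub>R v"
  shows "D (h *\<^sub>R v) = 0"
proof -
  obtain p q where v: "v = (p, q)" by force
  have "D (h *\<^sub>R v) = D ((h * p) *\<^sub>R (1, 0) + (h * q) *\<^sub>R (0, 1))"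
    using v by simp
  also have "\<dots> = h * p * D (1, 0) + h * q * D (0, 1)"
    by (simp only: linear_add[OF D] linear_scale[OF D] real_scaleR_def)
  also have "\<dots> = 0"
  proof -
    have "D (0, 1) = - (r * p)" "D (1, 0) = r * q"
      using grad v by auto
    then show ?thesis
      by (simp add: algebra_simps)
  qed
  finally show ?thesis .
qed

lemma has_derivative_zero_along_rotated_gradient:
  fixes c :: "real \<Rightarrow> real \<times> real" and F :: "real \<times> real \<Rightarrow> real"
  assumes c: "(c has_derivative (\<lambda>h. h *\<^sub>R v)) (at t)" and F: "(F has_derivative D) (at (c t))"
    and grad: "(- D (0, 1), D (1, 0)) = r *\<^sub>R v"
  shows "(F \<circ> c has_derivative (\<lambda>h. 0)) (at t)"
proof -
  have "(F \<circ> c has_derivative D \<circ> (\<lambda>h. h *\<^sub>R v)) (at t)"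
    using c F by (rule diff_chain_at)
  moreover have "D \<circ> (\<lambda>h. h *\<^sub>R v) = (\<lambda>h. 0)"
    using linear_rotated_gradient_annihilates[OF has_derivative_linear[OF F] grad]
    by (simp add: fun_eq_iff)
  ultimately show ?thesis
    by simp
qed

lemma lipschitz_on_indefinite_integral:
  fixes g :: "real \<Rightarrow> 'a::euclidean_space"
  assumes g_int: "\<And>u w. g integrable_on {u..w}" and M: "\<And>s. norm (g s) \<le> M"
  shows "M-lipschitz_on {a..} (\<lambda>s. integral {a..s} g)"
proof (rule lipschitz_on_leI)
  fix u w assume "u \<in> {a..}" "w \<in> {a..}" "u \<le> w"
  have "integral {a..u} g + integral {u..w} g = integral {a..w} g"
    using g_int \<open>u \<in> {a..}\<close> \<open>u \<le> w\<close> by (intro Henstock_Kurzweil_Integration.integral_combine) auto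
  then have "integral {a..w} g - integral {a..u} g = integral {u..w} g"
    by (simp add: algebra_simps)
  then have "dist (integral {a..u} g) (integral {a..w} g) = norm (integral {u..w} g)"
    using dist_norm[of "integral {a..w} g" "integral {a..u} g"]
      dist_commute[of "integral {a..u} g" "integral {a..w} g"] by simp
  also have "\<dots> \<le> integral {u..w} (\<lambda>_. M)"
    using g_int M by (intro integral_norm_bound_integral) auto
  also have "\<dots> = M * dist u w"
    using \<open>u \<le> w\<close> by (simp add: dist_real_def)
  finally show "dist (integral {a..u} g) (integral {a..w} g) \<le> M * dist u w" .
qed (use norm_ge_zero M order_trans in blast)

lemma integral_curve_lift:
  assumes ic: "integral_curve b T \<gamma>" and b: "b \<in> borel_measurable borel"
    and M: "\<And>z. z \<in> torus \<Longrightarrow> norm (b z) \<le> M" and T: "0 \<le> T"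
  obtains c Z where "\<forall>t\<in>{0..T}. \<gamma> t = tor (c t)" "M-lipschitz_on {0..T} c"
    "negligible Z" "\<forall>t\<in>{0<..<T} - Z. (c has_derivative (\<lambda>h. h *\<^sub>R b (\<gamma> t))) (at t)"
proof -
  have flow: "\<gamma> t = tadd (\<gamma> 0) (LINT \<tau>:{0..t}|lborel. b (\<gamma> \<tau>))" if "t \<in> {0..T}" for t
    using conjunct2[OF ic[unfolded integral_curve_def]] that by (rule bspec)
  have "\<gamma> \<in> Gamma T"
    using ic[unfolded integral_curve_def] by (rule conjunct1)
  then have \<gamma>: "continuous_on {0..T} \<gamma>" "\<gamma> ` {0..T} \<subseteq> torus"
    unfolding Gamma_def by simp_all
  have "\<gamma> 0 \<in> torus"
    using \<gamma>(2) T by auto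
  then obtain x0 where x0: "\<gamma> 0 = tor x0"
    unfolding torus_def by blast
  define cl where "cl s = max 0 (min T s)" for s
  have cl: "cl s \<in> {0..T}" "s \<in> {0..T} \<Longrightarrow> cl s = s" for s
    using T by (auto simp: cl_def)
  have "continuous_on UNIV cl"
    unfolding cl_def by (intro continuous_intros)
  then have "continuous_on UNIV (\<lambda>s. \<gamma> (cl s))"
    by (rule continuous_on_compose2[OF \<gamma>(1)]) (use cl(1) in auto)
  define v where "v = (\<lambda>s. b (\<gamma> (cl s)))"
  have v: "v \<in> borel_measurable borel"
    unfolding v_def
    using measurable_compose[OF borel_measurable_continuous_onI[OF \<open>continuous_on UNIV (\<lambda>s. \<gamma> (cl s))\<close>] b]
    by (simp only: o_def)
  have v_bound: "norm (v s) \<le> M" for s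
    unfolding v_def using \<gamma>(2) cl(1)[of s] by (intro M) auto
  have v_int: "v integrable_on {u..w}" for u w
    using bounded_measurable_absolutely_integrable_on[OF v v_bound lmeasurable_interval(1)]
    by (simp add: absolutely_integrable_on_def)
  define c where "c s = x0 + integral {0..s} v" for s
  have lift: "\<gamma> t = tor (c t)" if t: "t \<in> {0..T}" for t
  proof -
    have "(LINT \<tau>:{0..t}|lborel. b (\<gamma> \<tau>)) = (LINT \<tau>:{0..t}|lborel. v \<tau>)"
      using t by (intro set_lebesgue_integral_cong) (auto simp: v_def cl(2))
    also have "\<dots> = integral {0..t} v"
      using v v_bound by (rule bounded_measurable_set_integral_eq_integral) (use t in simp_all)
    finally show ?thesis
      using flow[OF t] x0 by (simp add: tadd_tor c_def)
  qed
  have "M-lipschitz_on {0..T} (\<lambda>s. integral {0..s} v)"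
    by (rule lipschitz_on_subset[OF lipschitz_on_indefinite_integral[OF v_int v_bound]]) auto
  then have lipschitz: "M-lipschitz_on {0..T} c"
    unfolding c_def lipschitz_on_def by simp
  obtain Z where Z: "negligible Z"
    "\<And>a t. t \<notin> Z \<Longrightarrow> a < t \<Longrightarrow> ((\<lambda>s. integral {a..s} v) has_derivative (\<lambda>h. h *\<^sub>R v t)) (at t)"
    using bounded_measurable_indefinite_integral_has_derivative_ae[OF v v_bound] by blast
  have "\<forall>t\<in>{0<..<T} - Z. (c has_derivative (\<lambda>h. h *\<^sub>R b (\<gamma> t))) (at t)"
  proof
    fix t assume t: "t \<in> {0<..<T} - Z"
    have "v t = b (\<gamma> t)"
      using t by (simp add: v_def cl(2))
    then show "(c has_derivative (\<lambda>h. h *\<^sub>R b (\<gamma> t))) (at t)"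
      using has_derivative_add_const[OF Z(2)[of t 0], of x0] t unfolding c_def by (simp add: add.commute)
  qed
  moreover have "\<forall>t\<in>{0..T}. \<gamma> t = tor (c t)"
    using lift by blast
  ultimately show ?thesis
    using that lipschitz Z(1) by blast
qed

lemma integral_curve_first_integral_constant:
  assumes ic: "integral_curve b T \<gamma>" and b: "b \<in> borel_measurable borel"
    and M: "\<And>z. z \<in> torus \<Longrightarrow> norm (b z) \<le> M"
    and H: "L-lipschitz_on UNIV (H \<circ> tor)"
    and visits: "negligible {t\<in>{0..T}. \<gamma> t \<in> A}"
    and perp: "\<forall>x. tor x \<notin> A \<longrightarrow> tor x \<in> B \<longrightarrow>
      (\<exists>D r. ((H \<circ> tor) has_derivative D) (at x) \<and> (- D (0, 1), D (1, 0)) = r *\<^sub>R b (tor x))"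
    and sub: "\<gamma> ` {t1<..<t2} \<subseteq> B" and t12: "0 \<le> t1" "t2 \<le> T"
  shows "\<exists>k. \<forall>t\<in>{t1<..<t2}. H (\<gamma> t) = k"
proof (cases "t1 < t2")
  case True
  then have "0 \<le> T"
    using t12 by linarith
  obtain c Z where c: "\<forall>t\<in>{0..T}. \<gamma> t = tor (c t)" "M-lipschitz_on {0..T} c"
    and Z: "negligible Z" "\<forall>t\<in>{0<..<T} - Z. (c has_derivative (\<lambda>h. h *\<^sub>R b (\<gamma> t))) (at t)"
    by (rule integral_curve_lift[OF ic b M \<open>0 \<le> T\<close>])
  have sub_T: "{t1<..<t2} \<subseteq> {0<..<T}"
    using t12 by auto
  define f where "f = (H \<circ> tor) \<circ> c"
  have "(L * M)-lipschitz_on {t1<..<t2} f"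
    unfolding f_def using sub_T
    by (intro lipschitz_on_compose lipschitz_on_subset[OF c(2)] lipschitz_on_subset[OF H]) auto
  moreover have "negligible (Z \<union> {t\<in>{0..T}. \<gamma> t \<in> A})"
    using Z(1) visits by (rule negligible_Un)
  moreover have "(f has_derivative (\<lambda>h. 0)) (at t)"
    if t: "t \<in> {t1<..<t2} - (Z \<union> {t\<in>{0..T}. \<gamma> t \<in> A})" for t
  proof -
    have "t \<in> {0..T}"
      using t sub_T by auto
    then have \<gamma>t: "\<gamma> t = tor (c t)"
      using c(1) by blast
    have "\<gamma> t \<in> B"
      using t sub by blast
    moreover have "\<gamma> t \<notin> A"
      using t \<open>t \<in> {0..T}\<close> by blast
    ultimately obtain D r where D: "((H \<circ> tor) has_derivative D) (at (c t))"
      "(- D (0, 1), D (1, 0)) = r *\<^sub>R b (\<gamma> t)"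
      using perp unfolding \<gamma>t by blast
    have "(c has_derivative (\<lambda>h. h *\<^sub>R b (\<gamma> t))) (at t)"
      using t sub_T Z(2) by blast
    then show ?thesis
      unfolding f_def using D by (rule has_derivative_zero_along_rotated_gradient)
  qed
  ultimately obtain k where k: "\<forall>t\<in>{t1<..<t2}. f t = k"
    using lipschitz_zero_derivative_ae_imp_constant[OF is_interval_connected[OF is_interval_oo]]
    by (metis (no_types, lifting))
  have "H (\<gamma> t) = k" if "t \<in> {t1<..<t2}" for t
    using k that sub_T c(1) by (auto simp: f_def)
  then show ?thesis
    by blast
qed auto

theorem mainTheorem5:
  fixes T :: real
    and b :: "complex \<times> complex \<Rightarrow> real \<times> real"
    and \<rho> \<rho>B :: "real \<Rightarrow> complex \<times> complex \<Rightarrow> real"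
    and \<eta> :: "(real \<Rightarrow> complex \<times> complex) measure"
    and B :: "(complex \<times> complex) set"
    and H :: "complex \<times> complex \<Rightarrow> real"
    and t1 t2 :: real
  assumes T_pos: "T > 0"
    and b_borel: "b \<in> borel_measurable borel"
    and b_bdd: "bounded (b ` torus)"
    and b_BV: "BV_torus b"
    and b_ni: "nearly_incompressible T b \<rho>"
    and \<eta>_fin: "finite_measure \<eta>"
    and \<eta>_sets: "sets \<eta> = sets (Gamma_M T)"
    and \<eta>_conc: "AE \<gamma> in \<eta>. integral_curve b T \<gamma>"
    and \<eta>_marg: "\<forall>t\<in>{0..T}. distr \<eta> borel (\<lambda>\<gamma>. \<gamma> t) = density tleb (\<lambda>x. ennreal (\<rho> t x))"
    and B_in: "B \<in> ratballs"
    and \<rho>B_meas: "(\<lambda>(t, x). \<rho>B t x) \<in> borel_measurable borel"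
    and \<rho>B_nonneg: "\<forall>t x. \<rho>B t x \<ge> 0"
    and \<rho>B_marg: "\<forall>t\<in>{0..T}. distr (density \<eta> (indicator (TB b T B))) borel (\<lambda>\<gamma>. \<gamma> t)
                                = density tleb (\<lambda>x. ennreal (\<rho>B t x))"
    and H_lip: "\<exists>L. L-lipschitz_on UNIV (H \<circ> tor)"
    and H_grad: "AE x in lborel. tor x \<in> B \<longrightarrow>
                   (\<exists>D. ((H \<circ> tor) has_derivative D) (at x) \<and>
                        (- D (0, 1), D (1, 0)) = (LINT t:{0..T}|lborel. \<rho>B t (tor x)) *\<^sub>R b (tor x))"
    and t1: "t1 \<in> {0..T}" and t2: "t2 \<in> {0..T}"
  shows "AE \<gamma> in \<eta>. (\<gamma> \<in> Gamma T \<and> \<gamma> ` {t1<..<t2} \<subseteq> B) \<longrightarrow>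
           (\<exists>c. \<forall>t\<in>{t1<..<t2}. H (\<gamma> t) = c)"
proof -
  \<comment> \<open>only the direction of \<open>\<nabla>\<^sup>\<bottom>H\<close> matters; the factor \<open>r\<^sub>B\<close> is forgotten\<close>
  have "AE x in lborel. tor x \<in> B \<longrightarrow>
      (\<exists>D r. ((H \<circ> tor) has_derivative D) (at x) \<and> (- D (0, 1), D (1, 0)) = r *\<^sub>R b (tor x))"
    using H_grad by eventually_elim blast
  then obtain A where A: "A \<in> sets borel" "emeasure tleb A = 0" and perp: "\<forall>x. tor x \<notin> A \<longrightarrow>
      tor x \<in> B \<longrightarrow> (\<exists>D r. ((H \<circ> tor) has_derivative D) (at x) \<and> (- D (0, 1), D (1, 0)) = r *\<^sub>R b (tor x))"
    by (rule AE_lborel_imp_off_tleb_null)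
  have visits: "AE \<gamma> in \<eta>. negligible {t\<in>{0..T}. \<gamma> t \<in> A}"
    by (rule AE_negligible_visits_tleb_null[where f = "\<lambda>t x. ennreal (\<rho> t x)",
          OF \<eta>_fin \<eta>_sets _ _ nearly_incompressible_density_measurable[OF b_ni] A])
       (use T_pos \<eta>_marg in auto)
  obtain M where M: "\<And>z. z \<in> torus \<Longrightarrow> norm (b z) \<le> M"
    using b_bdd by (auto simp: bounded_iff)
  obtain L where L: "L-lipschitz_on UNIV (H \<circ> tor)"
    using H_lip by blast
  show ?thesis
    using \<eta>_conc visits
    by eventually_elim
       (use t1 t2 in \<open>auto intro: integral_curve_first_integral_constant[OF _ b_borel M L _ perp]\<close>)
qed

end
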